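(* Consider plain SGD (no momentum) with scalar learning rate $\lambda>0$ and batch size $S$ on linear regression with label noise in the limit $N\to\infty$. Let $G:=2I_D-\lambda\left(1+\frac1S\right)A$ and $\kappa:=\frac{\mathrm{Tr}[AG^{-1}]}{1-\frac\lambda S\mathrm{Tr}[AG^{-1}]}$ (with $G$ invertible and the denominator nonzero). Then the expected training loss $L_{\rm train}:=\mathbb{E}_{\mathbf{w}}[L(\mathbf{w})]$ and the expected test loss $L_{\rm test}:=\frac12\mathbb{E}_{\mathbf{w}}\mathbb{E}_x[((\mathbf{w}-\mathbf{u})^{\mathrm T}x)^2]$ are $$L_{\rm train}=\frac{\sigma^2}{2}\left(1+\frac{\lambda\kappa}{S}\right),\qquad L_{\rm test}=\frac{\lambda\sigma^2}{2S}\kappa.$$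
   Context: Data: $x_i\in\mathbb{R}^D$ i.i.d. $\mathcal N(0,A)$, $A$ symmetric positive definite; $y_i=\mathbf{u}^{\mathrm T}x_i+\epsilon_i$ with $\epsilon_i$ i.i.d., independent of the $x_i$, mean $0$, variance $\sigma^2$; $L(\mathbf{w})=\frac1{2N}\sum_i(\mathbf{w}^{\mathrm T}x_i-y_i)^2$. SGD: $\mathbf{w}_t=\mathbf{w}_{t-1}-\frac\lambda S\sum_{i\in B_t}\nabla\ell_i(\mathbf{w}_{t-1})$. $\mathbb{E}_{\mathbf{w}}$ is over the stationary distribution, which has mean $\mathbf{u}$ and covariance $\Sigma$ satisfying $\lambda(A\Sigma+\Sigma A)-\lambda^2A\Sigma A=\lambda^2C$ with $C=\frac1S(A\Sigma A+\mathrm{Tr}[A\Sigma]A+\sigma^2A)$. *)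

theory Defs
  imports "HOL-Analysis.Analysis" "HOL-Probability.Probability"
begin

text \<open>Population (N to infinity) training loss of linear regression with label noise:
  for x ~ N(0,A) and y = u.x + eps with eps of mean 0 and variance sigma^2 independent of x,
  E_{x,eps}[ 1/2 (w.x - y)^2 ] = 1/2 (w-u)^T A (w-u) + sigma^2/2.\<close>
definition pop_train_loss :: "real^'n^'n \<Rightarrow> real^'n \<Rightarrow> real \<Rightarrow> real^'n \<Rightarrow> real" where
  "pop_train_loss A u \<sigma> w = (1/2) * ((w - u) \<bullet> (A *v (w - u))) + \<sigma>^2 / 2"

text \<open>Pointwise test loss 1/2 E_x[((w-u)^T x)^2] for x ~ N(0,A), i.e. 1/2 (w-u)^T A (w-u).\<close>
definition pointwise_test_loss :: "real^'n^'n \<Rightarrow> real^'n \<Rightarrow> real^'n \<Rightarrow> real" where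
  "pointwise_test_loss A u w = (1/2) * ((w - u) \<bullet> (A *v (w - u)))"

definition cov_matrix :: "(real^'n) measure \<Rightarrow> real^'n \<Rightarrow> real^'n^'n" where
  "cov_matrix M u = (\<chi> i j. integral\<^sup>L M (\<lambda>w. (w$i - u$i) * (w$j - u$j)))"

end

theory Submission
  imports Defs
begin

text \<open>Both losses are affine in t = Tr[A \<Sigma>], the expectation of (w - u)^T A (w - u).
  Multiply the stationarity equation by G^-1 and take traces. Since G^-1 commutes with A,
  cyclicity of the trace turns the left-hand side into \<lambda> Tr[G^-1 (2 I - \<lambda> A) A \<Sigma>]; moving
  \<lambda>^2/S Tr[G^-1 A A \<Sigma>] over from the right leaves \<lambda> Tr[G^-1 G A \<Sigma>] = \<lambda> t there. What remains
  is the scalar equation t = \<lambda>/S (t + \<sigma>^2) Tr[A G^-1], whose solution is t = \<lambda> \<sigma>^2 \<kappa> / S.\<close>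

lemma trace_scaleR: "trace (c *\<^sub>R (M::real^'n^'n)) = c * trace M"
  by (simp add: trace_def sum_distrib_left)

lemma matrix_diff_ldistrib: "(X::real^'n^'n) ** (M - N) = X ** M - X ** N"
  by (vector matrix_matrix_mult_def sum_subtractf field_simps)

lemma matrix_diff_rdistrib: "((M::real^'n^'n) - N) ** X = M ** X - N ** X"
  by (vector matrix_matrix_mult_def sum_subtractf field_simps)

lemma matrix_inv_mult:
  assumes "invertible G"
  shows "G ** matrix_inv G = mat 1" and "matrix_inv G ** G = mat 1"
  using someI_ex[OF assms[unfolded invertible_def]] by (simp_all add: matrix_inv_def)

lemma matrix_inv_commute:
  fixes G A :: "real^'n^'n"
  assumes "invertible G" and "G ** A = A ** G"
  shows "matrix_inv G ** A = A ** matrix_inv G"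
proof -
  let ?X = "matrix_inv G"
  have "?X ** A = ?X ** (A ** G) ** ?X"
    using matrix_inv_mult(1)[OF assms(1)] by (simp add: matrix_mul_assoc[symmetric])
  also have "\<dots> = (?X ** G) ** A ** ?X"
    by (simp add: assms(2)[symmetric] matrix_mul_assoc)
  also have "\<dots> = A ** ?X"
    using matrix_inv_mult(2)[OF assms(1)] by simp
  finally show ?thesis .
qed

lemma trace_mult_commuting:
  fixes X A N :: "real^'n^'n"
  assumes "X ** A = A ** X"
  shows "trace (X ** (N ** A)) = trace (X ** (A ** N))"
  by (metis assms matrix_mul_assoc trace_mul_sym)

lemma trace_stationary_covariance:
  fixes A \<Sigma> :: "real^'n^'n" and lr s \<sigma> :: real
  defines "G \<equiv> 2 *\<^sub>R mat 1 - (lr * (1 + s)) *\<^sub>R A"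
  assumes lr: "lr \<noteq> 0"
    and G_inv: "invertible G"
    and stat: "lr *\<^sub>R (A ** \<Sigma> + \<Sigma> ** A) - lr\<^sup>2 *\<^sub>R (A ** \<Sigma> ** A)
             = lr\<^sup>2 *\<^sub>R (s *\<^sub>R (A ** \<Sigma> ** A + trace (A ** \<Sigma>) *\<^sub>R A + \<sigma>\<^sup>2 *\<^sub>R A))"
  shows "trace (A ** \<Sigma>) = lr * s * (trace (A ** \<Sigma>) + \<sigma>\<^sup>2) * trace (A ** matrix_inv G)"
proof -
  define X where "X = matrix_inv G"
  define t where "t = trace (A ** \<Sigma>)"
  define k where "k = trace (A ** X)"
  define p where "p = trace (X ** (A ** \<Sigma>))"
  define q where "q = trace (X ** (A ** (A ** \<Sigma>)))"
  have XA: "X ** A = A ** X"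
    unfolding X_def G_def using G_inv[unfolded G_def]
    by (intro matrix_inv_commute)
       (simp_all add: matrix_diff_ldistrib matrix_diff_rdistrib matrix_scalar_ac
                      scalar_matrix_assoc[symmetric])
  have "trace (X ** (\<Sigma> ** A)) = p"
    using trace_mult_commuting[OF XA, of \<Sigma>] by (simp add: p_def)
  moreover have "trace (X ** (A ** \<Sigma> ** A)) = q"
    using trace_mult_commuting[OF XA, of "A ** \<Sigma>"] by (simp add: matrix_mul_assoc q_def)
  moreover have "trace (X ** A) = k"
    by (simp add: XA k_def)
  ultimately have traced: "lr * (2 * p) - lr\<^sup>2 * q = lr\<^sup>2 * (s * (q + t * k + \<sigma>\<^sup>2 * k))"
    using arg_cong[OF stat, of "\<lambda>N. trace (X ** N)"]
    by (simp add: matrix_add_ldistrib matrix_diff_ldistrib matrix_scalar_ac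
                  scalar_matrix_assoc[symmetric] trace_add trace_sub trace_scaleR p_def t_def)
       (simp add: algebra_simps)
  have t_pq: "t = 2 * p - lr * (1 + s) * q"
  proof -
    have "t = trace (X ** (G ** (A ** \<Sigma>)))"
      using matrix_inv_mult(2)[OF G_inv] by (simp add: X_def t_def matrix_mul_assoc)
    then show ?thesis
      by (simp add: G_def matrix_diff_ldistrib matrix_diff_rdistrib matrix_scalar_ac
                    scalar_matrix_assoc[symmetric] matrix_mul_assoc trace_sub trace_scaleR p_def q_def)
  qed
  have "lr * t = (lr * (2 * p) - lr\<^sup>2 * q) - lr\<^sup>2 * s * q"
    unfolding t_pq by (simp add: power2_eq_square algebra_simps)
  also have "\<dots> = lr * (lr * s * (t + \<sigma>\<^sup>2) * k)"
    unfolding traced by (simp add: power2_eq_square algebra_simps)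
  finally show ?thesis
    using lr by (simp add: t_def k_def X_def)
qed

lemma solve_linear_fixed_point:
  fixes t c v k :: real
  assumes "t = c * (t + v) * k" and "1 - c * k \<noteq> 0"
  shows "t = c * v * (k / (1 - c * k))"
  using assms by (simp add: field_simps)

lemma inner_matrix_vector_mult_eq_sum:
  "(x::real^'n) \<bullet> (A *v x) = (\<Sum>i\<in>UNIV. \<Sum>j\<in>UNIV. A$i$j * (x$i * x$j))"
  by (simp add: inner_vec_def matrix_vector_mult_def sum_distrib_left algebra_simps)

lemma integrable_centered_product:
  assumes "finite_measure M"
    and "\<And>i. integrable M (\<lambda>w. w$i)" and "\<And>i j. integrable M (\<lambda>w. w$i * w$j)"
  shows "integrable M (\<lambda>w::real^'n. (w$i - u$i) * (w$j - u$j))"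
proof -
  have "(\<lambda>w::real^'n. (w$i - u$i) * (w$j - u$j))
      = (\<lambda>w. w$i * w$j - u$j * w$i - u$i * w$j + u$i * u$j)"
    by (auto simp: algebra_simps)
  then show ?thesis
    using assms finite_measure.integrable_const[OF assms(1)]
    by (auto intro!: Bochner_Integration.integrable_add Bochner_Integration.integrable_diff)
qed

lemma
  fixes A :: "real^'n^'n"
  assumes "finite_measure M"
    and "\<And>i. integrable M (\<lambda>w. w$i)" and "\<And>i j. integrable M (\<lambda>w. w$i * w$j)"
  shows integrable_quadratic_form: "integrable M (\<lambda>w. (w - u) \<bullet> (A *v (w - u)))"
    and integral_quadratic_form:
      "integral\<^sup>L M (\<lambda>w. (w - u) \<bullet> (A *v (w - u))) = trace (A ** cov_matrix M u)"
proof -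
  note integrable = integrable_centered_product[OF assms, where u = u]
  show "integrable M (\<lambda>w. (w - u) \<bullet> (A *v (w - u)))"
    using integrable by (simp add: inner_matrix_vector_mult_eq_sum)
  have "integral\<^sup>L M (\<lambda>w. (w - u) \<bullet> (A *v (w - u)))
      = (\<Sum>i\<in>UNIV. \<Sum>j\<in>UNIV. A$i$j * integral\<^sup>L M (\<lambda>w. (w$i - u$i) * (w$j - u$j)))"
    using integrable by (simp add: inner_matrix_vector_mult_eq_sum)
  also have "\<dots> = trace (A ** cov_matrix M u)"
    by (simp add: trace_def matrix_matrix_mult_def cov_matrix_def mult.commute)
  finally show "integral\<^sup>L M (\<lambda>w. (w - u) \<bullet> (A *v (w - u))) = trace (A ** cov_matrix M u)" .
qed

theorem theorem8:
  fixes A :: "real^'n^'n" and u :: "real^'n" and M :: "(real^'n) measure"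
    and lr \<sigma> :: real and S :: nat
  assumes A_sym: "transpose A = A"
    and A_pd: "\<And>x. x \<noteq> 0 \<Longrightarrow> x \<bullet> (A *v x) > 0"
    and lam_pos: "lr > 0"
    and S_pos: "S \<ge> 1"
    and M_prob: "prob_space M"
    and M_space: "space M = UNIV"
    and int1: "\<And>i. integrable M (\<lambda>w. w$i)"
    and int2: "\<And>i j. integrable M (\<lambda>w. w$i * w$j)"
    and mean: "\<And>i. integral\<^sup>L M (\<lambda>w. w$i) = u$i"
    and stat: "let \<Sigma> = cov_matrix M u;
                   C = (1 / real S) *\<^sub>R (A ** \<Sigma> ** A + trace (A ** \<Sigma>) *\<^sub>R A + \<sigma>^2 *\<^sub>R A)
               in lr *\<^sub>R (A ** \<Sigma> + \<Sigma> ** A) - lr^2 *\<^sub>R (A ** \<Sigma> ** A) = lr^2 *\<^sub>R C"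
    and G_inv: "invertible (2 *\<^sub>R mat 1 - (lr * (1 + 1 / real S)) *\<^sub>R A)"
    and denom: "1 - (lr / real S) * trace (A ** matrix_inv (2 *\<^sub>R mat 1 - (lr * (1 + 1 / real S)) *\<^sub>R A)) \<noteq> 0"
  shows "let G = 2 *\<^sub>R mat 1 - (lr * (1 + 1 / real S)) *\<^sub>R A;
             kappa = trace (A ** matrix_inv G) / (1 - (lr / real S) * trace (A ** matrix_inv G))
         in integral\<^sup>L M (pop_train_loss A u \<sigma>) = \<sigma>^2 / 2 * (1 + lr * kappa / real S)
          \<and> integral\<^sup>L M (pointwise_test_loss A u) = lr * \<sigma>^2 / (2 * real S) * kappa"
proof -
  interpret prob_space M by (fact M_prob)
  define G where "G = 2 *\<^sub>R mat 1 - (lr * (1 + 1 / real S)) *\<^sub>R A"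
  define k where "k = trace (A ** matrix_inv G)"
  define t where "t = trace (A ** cov_matrix M u)"
  have "t = lr / real S * (t + \<sigma>\<^sup>2) * k"
    using trace_stationary_covariance[OF _ G_inv] stat lam_pos by (simp add: Let_def t_def k_def G_def)
  then have t: "t = lr / real S * \<sigma>\<^sup>2 * (k / (1 - lr / real S * k))"
    using denom by (intro solve_linear_fixed_point) (simp_all add: k_def G_def)
  have quadratic: "integral\<^sup>L M (\<lambda>w. (w - u) \<bullet> (A *v (w - u))) = t"
    using integral_quadratic_form[OF finite_measure_axioms int1 int2] by (simp add: t_def)
  have "integral\<^sup>L M (pointwise_test_loss A u) = t / 2"
    unfolding pointwise_test_loss_def using quadratic by simp
  moreover have "integral\<^sup>L M (pop_train_loss A u \<sigma>) = t / 2 + \<sigma>\<^sup>2 / 2"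
    unfolding pop_train_loss_def
    using quadratic integrable_quadratic_form[OF finite_measure_axioms int1 int2, of u A]
    by (simp add: prob_space)
  ultimately show ?thesis
    unfolding Let_def G_def[symmetric] k_def[symmetric] t by (simp add: algebra_simps)
qed

end
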